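(* The map $G$ is continuous on the metric space $(\mathcal{X},d)$.
   Context: Fix an integer $\mathsf{N}\ge 1$ and write $\llbracket a;b\rrbracket=\{a,a+1,\dots,b\}$. Let $f:\mathbb{Z}/4\mathbb{Z}\to\mathbb{Z}/4\mathbb{Z}$, $f(x)=x+1 \pmod 4$, with $f^{-1}(x)=x-1\pmod 4$ and $f^0=\mathrm{id}$. Let $\mathrm{sign}(x)=1$ if $x>0$, $0$ if $x=0$, $-1$ if $x<0$. For $k\in\llbracket -\mathsf{N};\mathsf{N}\rrbracket$ define $f_k:(\mathbb{Z}/4\mathbb{Z})^{\mathsf{N}}\to(\mathbb{Z}/4\mathbb{Z})^{\mathsf{N}}$ by $f_k(C_1,\dots,C_{\mathsf{N}})=(C_1,\dots,C_{|k|-1},f^{\mathrm{sign}(k)}(C_{|k|}),\dots,f^{\mathrm{sign}(k)}(C_{\mathsf{N}}))$ (so $f_0$ is the identity). Folding sequences are $F=(F^j)_{j\in\mathbb{N}}\in\llbracket -\mathsf{N};\mathsf{N}\rrbracket^{\mathbb{N}}$; let $i(F)=F^0$ and let $\sigma$ be the shift, $\sigma((F^j)_{j})=(F^{j+1})_{j}$. A finite sequence $(k_1,\dots,k_n)$ is identified with $(k_1,\dots,k_n,0,0,\dots)$. On $\check{\mathcal{X}}=(\mathbb{Z}/4\mathbb{Z})^{\mathsf{N}}\times\llbracket -\mathsf{N};\mathsf{N}\rrbracket^{\mathbb{N}}$ define $G((C,F))=(f_{i(F)}(C),\sigma(F))$. SAW requirement: for $C\in(\mathbb{Z}/4\mathbb{Z})^{\mathsf{N}}$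 let $p(C)=(X_0,\dots,X_{\mathsf{N}})\in(\mathbb{Z}^2)^{\mathsf{N}+1}$ with $X_0=(0,0)$ and $X_i=X_{i-1}+v(C_i)$, where $v(0)=(1,0)$, $v(1)=(0,-1)$, $v(2)=(-1,0)$, $v(3)=(0,1)$. $C$ satisfies the SAW requirement iff the points $X_0,\dots,X_{\mathsf{N}}$ are pairwise distinct. Let $\mathfrak{C}_{\mathsf{N}}$ be the set of $C\in(\mathbb{Z}/4\mathbb{Z})^{\mathsf{N}}$ for which there exist $n\ge1$ and $k_1,\dots,k_n\in\llbracket -\mathsf{N};\mathsf{N}\rrbracket$ such that $C$ is the first component of $G^n(((0,\dots,0),(k_1,\dots,k_n)))$ and, for every $i\le n$, the first component of $G^i(((0,\dots,0),(k_1,\dots,k_n)))$ satisfies the SAW requirement. Let $\mathcal{X}=\mathfrak{C}_{\mathsf{N}}\times\llbracket -\mathsf{N};\mathsf{N}\rrbracket^{\mathbb{N}}$ with metric $d((C,F),(\check C,\check F))=d_C(C,\check C)+d_F(F,\check F)$, where $d_C(C,\check C)=\sum_{k=1}^{\mathsf{N}}\delta(C_k,\check C_k)2^{\mathsf{N}-k}$ ($\delta(a,b)=0$ if $a=b$, $1$ otherwise) and $d_F(F,\check F)=\frac{9}{2\mathsf{N}}\sum_{k=0}^{\infty}\frac{|F^k-\check F^k|}{10^{k+1}}$. The paper regards $G$ as a self-map of $\mathcal{X}$. *)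

theory Defs
  imports Complex_Main
begin

text \<open>Configurations C in (Z/4Z)^N are represented as int lists of length N with entries
  in {0..3}; list index j (0-based) corresponds to coordinate C_(j+1).\<close>

definition fk :: "int \<Rightarrow> int list \<Rightarrow> int list" where
  "fk k C = map (\<lambda>j. if k \<noteq> 0 \<and> nat \<bar>k\<bar> \<le> Suc j then (C ! j + sgn k) mod 4 else C ! j)
                 [0..<length C]"

definition Gmap :: "int list \<times> (nat \<Rightarrow> int) \<Rightarrow> int list \<times> (nat \<Rightarrow> int)" where
  "Gmap x = (fk (snd x 0) (fst x), \<lambda>j. snd x (Suc j))"

definition vstep :: "int \<Rightarrow> int \<times> int" where
  "vstep c = (if c = 0 then (1, 0) else if c = 1 then (0, -1) else if c = 2 then (-1, 0) else (0, 1))"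

definition posn :: "int list \<Rightarrow> nat \<Rightarrow> int \<times> int" where
  "posn C i = ((\<Sum>j<i. fst (vstep (C ! j))), (\<Sum>j<i. snd (vstep (C ! j))))"

definition SAW :: "int list \<Rightarrow> bool" where
  "SAW C \<longleftrightarrow> distinct (map (posn C) [0..<Suc (length C)])"

definition finseq :: "int list \<Rightarrow> nat \<Rightarrow> int" where
  "finseq ks j = (if j < length ks then ks ! j else 0)"

definition reachableC :: "nat \<Rightarrow> int list set" where
  "reachableC N = {C. \<exists>ks. length ks \<ge> 1 \<and> (\<forall>k\<in>set ks. - int N \<le> k \<and> k \<le> int N) \<and>
      C = fst ((Gmap ^^ length ks) (replicate N 0, finseq ks)) \<and>
      (\<forall>i\<in>{1..length ks}. SAW (fst ((Gmap ^^ i) (replicate N 0, finseq ks))))}"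

definition Xspace :: "nat \<Rightarrow> (int list \<times> (nat \<Rightarrow> int)) set" where
  "Xspace N = {(C, F). C \<in> reachableC N \<and> (\<forall>j. - int N \<le> F j \<and> F j \<le> int N)}"

definition dC :: "nat \<Rightarrow> int list \<Rightarrow> int list \<Rightarrow> real" where
  "dC N C C' = (\<Sum>k=1..N. (if C ! (k - 1) = C' ! (k - 1) then 0 else 1) * 2 ^ (N - k))"

definition dF :: "nat \<Rightarrow> (nat \<Rightarrow> int) \<Rightarrow> (nat \<Rightarrow> int) \<Rightarrow> real" where
  "dF N F F' = 9 / (2 * real N) * (\<Sum>k. real_of_int \<bar>F k - F' k\<bar> / 10 ^ (k + 1))"

definition dX :: "nat \<Rightarrow> int list \<times> (nat \<Rightarrow> int) \<Rightarrow> int list \<times> (nat \<Rightarrow> int) \<Rightarrow> real" where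
  "dX N x y = dC N (fst x) (fst y) + dF N (snd x) (snd y)"

end

theory Submission
  imports Defs
begin

text \<open>Near a point, G is 10-Lipschitz. If d(x, y) < 9/(20N) then the configurations agree
  (any differing coordinate costs at least 1 in d_C) and the first folding letters agree
  (a differing first letter costs at least 9/(20N) in d_F). So G applies the same fold to the
  same configuration, and only the shifted folding sequences differ; the shift multiplies
  each weight 10^-(k+1) by 10.\<close>

lemma length_fk [simp]: "length (fk k C) = length C"
  by (simp add: fk_def)

lemma length_fst_funpow_Gmap: "length (fst ((Gmap ^^ n) x)) = length (fst x)"
  by (induction n) (auto simp: Gmap_def)

lemma reachableC_length: "C \<in> reachableC N \<Longrightarrow> length C = N"
  by (auto simp: reachableC_def length_fst_funpow_Gmap)

lemma dC_self [simp]: "dC N C C = 0"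
  by (simp add: dC_def)

lemma dC_nonneg: "0 \<le> dC N C C'"
  unfolding dC_def by (intro sum_nonneg) auto

lemma dC_less_one_imp_eq:
  assumes "dC N C C' < 1" "length C = N" "length C' = N"
  shows "C = C'"
proof (rule nth_equalityI)
  show "length C = length C'" using assms by simp
  fix i assume i: "i < length C"
  show "C ! i = C' ! i"
  proof (rule ccontr)
    assume differ: "C ! i \<noteq> C' ! i"
    let ?term = "\<lambda>k. (if C ! (k - 1) = C' ! (k - 1) then 0 else 1) * (2::real) ^ (N - k)"
    have "?term (Suc i) \<le> dC N C C'"
      unfolding dC_def using i assms(2) by (intro member_le_sum) auto
    moreover have "1 \<le> ?term (Suc i)"
      using differ by simp
    ultimately show False using assms(1) by simp
  qed
qed

lemma summable_bounded_diff_decimal: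
  assumes "\<And>k. \<bar>F k - F' k\<bar> \<le> B"
  shows "summable (\<lambda>k. real_of_int \<bar>F k - F' k\<bar> / 10 ^ (k + 1))"
proof (rule summable_comparison_test)
  show "\<exists>N. \<forall>n\<ge>N. norm (real_of_int \<bar>F n - F' n\<bar> / 10 ^ (n + 1))
                          \<le> real_of_int B * (1/10) ^ (n+1)"
  proof (intro exI allI impI)
    fix n :: nat
    have "real_of_int \<bar>F n - F' n\<bar> \<le> real_of_int B" using assms[of n] by linarith
    then show "norm (real_of_int \<bar>F n - F' n\<bar> / 10 ^ (n + 1))
                 \<le> real_of_int B * (1/10) ^ (n+1)"
      by (simp add: power_divide divide_right_mono)
  qed
  show "summable (\<lambda>n. real_of_int B * (1/10) ^ (n+1))"
    by (intro summable_mult summable_ignore_initial_segment) (simp add: summable_geometric)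
qed

lemma dF_split_head:
  assumes "\<And>k. \<bar>F k - F' k\<bar> \<le> B"
  shows "dF N F F' = 9 / (20 * real N) * \<bar>F 0 - F' 0\<bar>
                     + dF N (\<lambda>j. F (Suc j)) (\<lambda>j. F' (Suc j)) / 10"
proof -
  let ?f = "\<lambda>k. real_of_int \<bar>F k - F' k\<bar> / 10 ^ (k + 1)"
  have summable: "summable ?f"
    using summable_bounded_diff_decimal[OF assms] .
  have shifted: "(\<lambda>k. real_of_int \<bar>F (Suc k) - F' (Suc k)\<bar> / 10 ^ (k + 1))
                   = (\<lambda>k. 10 * ?f (Suc k))"
    by (auto simp: field_simps)
  have "summable (\<lambda>k. ?f (Suc k))"
    using summable by (subst summable_Suc_iff)
  then have "(\<Sum>k. real_of_int \<bar>F (Suc k) - F' (Suc k)\<bar> / 10 ^ (k + 1))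
               = 10 * suminf (\<lambda>k. ?f (Suc k))"
    unfolding shifted by (rule suminf_mult)
  moreover have "suminf ?f = ?f 0 + suminf (\<lambda>k. ?f (Suc k))"
    using suminf_split_head[OF summable] by simp
  ultimately have "suminf ?f = \<bar>F 0 - F' 0\<bar> / 10
                     + (\<Sum>k. real_of_int \<bar>F (Suc k) - F' (Suc k)\<bar> / 10 ^ (k + 1)) / 10"
    by simp
  moreover have "\<And>a S :: real. 9 / (2 * real N) * (a / 10 + S / 10)
                                   = 9 / (20 * real N) * a + 9 / (2 * real N) * S / 10"
    by (simp add: distrib_left)
  ultimately show ?thesis
    unfolding dF_def by simp
qed

lemma dF_nonneg:
  assumes "\<And>k. \<bar>F k - F' k\<bar> \<le> B"
  shows "0 \<le> dF N F F'"
  unfolding dF_def using summable_bounded_diff_decimal[OF assms]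
  by (intro mult_nonneg_nonneg suminf_nonneg) auto

lemma dF_shift_le:
  assumes "\<And>k. \<bar>F k - F' k\<bar> \<le> B"
  shows "dF N (\<lambda>j. F (Suc j)) (\<lambda>j. F' (Suc j)) \<le> 10 * dF N F F'"
proof -
  have "0 \<le> 9 / (20 * real N) * \<bar>F 0 - F' 0\<bar>"
    by simp
  then show ?thesis
    using dF_split_head[of F F' B N, OF assms] by linarith
qed

lemma dF_small_imp_head_eq:
  assumes "\<And>k. \<bar>F k - F' k\<bar> \<le> B" and "dF N F F' < 9 / (20 * real N)"
  shows "F 0 = F' 0"
proof (rule ccontr)
  assume "F 0 \<noteq> F' 0"
  then have "9 / (20 * real N) \<le> 9 / (20 * real N) * \<bar>F 0 - F' 0\<bar>"
    by (intro mult_le_cancel_left1[THEN iffD2]) auto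
  also have "\<dots> \<le> dF N F F'"
    using dF_split_head[of F F' B N, OF assms(1)]
      dF_nonneg[of "\<lambda>j. F (Suc j)" "\<lambda>j. F' (Suc j)" B N, OF assms(1)]
    by linarith
  finally show False using assms(2) by simp
qed

lemma Xspace_diff_bounded:
  assumes "(C, F) \<in> Xspace N" "(C', F') \<in> Xspace N"
  shows "\<bar>F k - F' k\<bar> \<le> 2 * int N"
proof -
  have "- int N \<le> F k" "F k \<le> int N" "- int N \<le> F' k" "F' k \<le> int N"
    using assms by (auto simp: Xspace_def)
  then show ?thesis by linarith
qed

lemma dX_Gmap_le:
  assumes "N \<ge> 1" "x \<in> Xspace N" "y \<in> Xspace N" "dX N x y < 9 / (20 * real N)"
  shows "dX N (Gmap x) (Gmap y) \<le> 10 * dX N x y"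
proof -
  obtain C F C' F' where x: "x = (C, F)" and y: "y = (C', F')"
    by (cases x, cases y)
  have bounded: "\<And>k. \<bar>F k - F' k\<bar> \<le> 2 * int N"
    using Xspace_diff_bounded assms(2,3) x y by blast
  have dF_ge_0: "0 \<le> dF N F F'"
    using dF_nonneg[of F F' "2 * int N" N, OF bounded] .
  have small: "dC N C C' + dF N F F' < 9 / (20 * real N)"
    using assms(4) x y by (simp add: dX_def)
  have "9 / (20 * real N) < 1"
    using assms(1) by (simp add: field_simps)
  then have "C = C'"
    using small dF_ge_0 dC_less_one_imp_eq reachableC_length assms(2,3) x y
    by (force simp: Xspace_def)
  moreover have "F 0 = F' 0"
    using dF_small_imp_head_eq[of F F' "2 * int N" N, OF bounded] small dC_nonneg[of N C C'] by simp
  ultimately have "dX N (Gmap x) (Gmap y) = dF N (\<lambda>j. F (Suc j)) (\<lambda>j. F' (Suc j))"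
    using x y by (simp add: dX_def Gmap_def)
  also have "\<dots> \<le> 10 * dF N F F'"
    using dF_shift_le[of F F' "2 * int N" N, OF bounded] .
  also have "\<dots> \<le> 10 * dX N x y"
    using dC_nonneg[of N C C'] x y by (simp add: dX_def)
  finally show ?thesis .
qed

theorem mainTheorem1:
  fixes N :: nat
  assumes "N \<ge> 1"
  shows "\<forall>x\<in>Xspace N. \<forall>\<epsilon>>0. \<exists>\<delta>>0. \<forall>y\<in>Xspace N.
           dX N x y < \<delta> \<longrightarrow> dX N (Gmap x) (Gmap y) < \<epsilon>"
proof (intro ballI allI impI)
  fix x and \<epsilon> :: real
  assume x: "x \<in> Xspace N" and \<epsilon>: "\<epsilon> > 0"
  define \<delta> where "\<delta> = min (9 / (20 * real N)) (\<epsilon> / 10)"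
  have "\<forall>y\<in>Xspace N. dX N x y < \<delta> \<longrightarrow> dX N (Gmap x) (Gmap y) < \<epsilon>"
  proof (intro ballI impI)
    fix y assume y: "y \<in> Xspace N" and close: "dX N x y < \<delta>"
    then have "dX N (Gmap x) (Gmap y) \<le> 10 * dX N x y"
      using dX_Gmap_le[OF assms x y] by (simp add: \<delta>_def)
    also have "\<dots> < \<epsilon>"
      using close by (simp add: \<delta>_def)
    finally show "dX N (Gmap x) (Gmap y) < \<epsilon>" .
  qed
  moreover have "\<delta> > 0"
    using \<epsilon> assms by (simp add: \<delta>_def)
  ultimately show "\<exists>\<delta>>0. \<forall>y\<in>Xspace N. dX N x y < \<delta> \<longrightarrow> dX N (Gmap x) (Gmap y) < \<epsilon>"
    by blast
qed

end
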